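(* Let $n\ge p$ and $\mathcal X\in\mathrm{St}(n,p,l)$. The orthogonal projection (with respect to the inner product $\langle\mathcal A,\mathcal B\rangle=\sum_{i,j,k}a_{ijk}b_{ijk}$) from $\mathbb R^{n\times p\times l}$ onto the tangent space $T_{\mathcal X}\mathrm{St}(n,p,l)$ is given, for $\mathcal U\in\mathbb R^{n\times p\times l}$, by $$\mathbf P_{\mathcal X}(\mathcal U)=\mathcal U-\tfrac12\mathcal X*(\mathcal X^\top*\mathcal U+\mathcal U^\top*\mathcal X)=\mathcal U-\mathcal X*\operatorname{sym}(\mathcal X^\top*\mathcal U)=(\mathcal I-\mathcal X*\mathcal X^\top)*\mathcal U+\mathcal X*\operatorname{skew}(\mathcal X^\top*\mathcal U).$$
   Context: Frontal slices $A^{(i)}=\mathcal A(:,:,i)$. $\operatorname{bcirc}(\mathcal A)$ is the block circulant matrix with $(i,j)$ block $A^{(((i-j)\bmod l)+1)}$; $\operatorname{unfold}$ stacks the frontal slices vertically, $\operatorname{fold}$ is its inverse; the t-product is $\mathcal A*\mathcal B=\operatorname{fold}(\operatorname{bcirc}(\mathcal A)\operatorname{unfold}(\mathcal B))$. The transpose $\mathcal A^\top$ of $\mathcal A\in\mathbb R^{n\times p\times l}$ is the $p\times n\times l$ tensor with frontal slices $(A^{(1)})^\top,(A^{(l)})^\top,\dots,(A^{(2)})^\top$. $\mathcal I$ is the identity tensor (first frontal slice the identity matrix, others zero). $\mathrm{St}(n,p,l)=\{\mathcal X\in\mathbb R^{n\times p\times l}:\mathcal X^\top*\mathcal X=\mathcal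 I\}$, an embedded submanifold of $\mathbb R^{n\times p\times l}$, and $T_{\mathcal X}\mathrm{St}(n,p,l)$ its tangent space at $\mathcal X$ (a linear subspace of $\mathbb R^{n\times p\times l}$). $\operatorname{sym}(\mathcal A)=(\mathcal A+\mathcal A^\top)/2$, $\operatorname{skew}(\mathcal A)=(\mathcal A-\mathcal A^\top)/2$. *)

theory Defs
  imports "HOL-Analysis.Analysis"
begin

text \<open>Third-order real tensors of size n x p x l are represented as functions
  A :: nat => nat => nat => real with 0-based indices, A i j k = a_{(i+1)(j+1)(k+1)},
  vanishing outside the index box. Frontal slice k (0-based) is (\<lambda>i j. A i j k).\<close>

type_synonym tensor = "nat \<Rightarrow> nat \<Rightarrow> nat \<Rightarrow> real"

definition tensors :: "nat \<Rightarrow> nat \<Rightarrow> nat \<Rightarrow> tensor set" where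
  "tensors n p l = {A. \<forall>i j k. (n \<le> i \<or> p \<le> j \<or> l \<le> k) \<longrightarrow> A i j k = 0}"

definition tadd :: "tensor \<Rightarrow> tensor \<Rightarrow> tensor" where
  "tadd A B = (\<lambda>i j k. A i j k + B i j k)"

definition tsub :: "tensor \<Rightarrow> tensor \<Rightarrow> tensor" where
  "tsub A B = (\<lambda>i j k. A i j k - B i j k)"

definition tscale :: "real \<Rightarrow> tensor \<Rightarrow> tensor" where
  "tscale c A = (\<lambda>i j k. c * A i j k)"

text \<open>t-product A * B = fold (bcirc A * unfold B) for A of size n x q x l, B of size q x m x l.
  Block (k,m) (0-based) of bcirc A is the frontal slice (k - m) mod l of A, hence
  slice k of A * B is  sum over m<l of  A^((k-m) mod l) B^(m).\<close>
definition tprod :: "nat \<Rightarrow> nat \<Rightarrow> tensor \<Rightarrow> tensor \<Rightarrow> tensor" where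
  "tprod l q A B = (\<lambda>i j k. if k < l then
      (\<Sum>m<l. \<Sum>r<q. A i r (nat ((int k - int m) mod int l)) * B r j m) else 0)"

text \<open>Transpose: frontal slices (A^(1))^T, (A^(l))^T, ..., (A^(2))^T, i.e. 0-based slice k is
  the transpose of slice (l - k) mod l.\<close>
definition ttrans :: "nat \<Rightarrow> tensor \<Rightarrow> tensor" where
  "ttrans l A = (\<lambda>i j k. if k < l then A j i ((l - k) mod l) else 0)"

definition tid :: "nat \<Rightarrow> nat \<Rightarrow> tensor" where
  "tid p l = (\<lambda>i j k. if i = j \<and> i < p \<and> k = 0 \<and> 0 < l then 1 else 0)"

definition tsym :: "nat \<Rightarrow> tensor \<Rightarrow> tensor" where
  "tsym l A = tscale (1/2) (tadd A (ttrans l A))"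

definition tskew :: "nat \<Rightarrow> tensor \<Rightarrow> tensor" where
  "tskew l A = tscale (1/2) (tsub A (ttrans l A))"

definition tinner :: "nat \<Rightarrow> nat \<Rightarrow> nat \<Rightarrow> tensor \<Rightarrow> tensor \<Rightarrow> real" where
  "tinner n p l A B = (\<Sum>i<n. \<Sum>j<p. \<Sum>k<l. A i j k * B i j k)"

definition stiefel :: "nat \<Rightarrow> nat \<Rightarrow> nat \<Rightarrow> tensor set" where
  "stiefel n p l = {X \<in> tensors n p l. tprod l n (ttrans l X) X = tid p l}"

definition tangent_space :: "nat \<Rightarrow> nat \<Rightarrow> nat \<Rightarrow> tensor \<Rightarrow> tensor set" where
  "tangent_space n p l X = {V. \<exists>\<gamma> :: real \<Rightarrow> tensor. \<exists>\<epsilon>>0.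
      \<gamma> 0 = X \<and> (\<forall>t. \<bar>t\<bar> < \<epsilon> \<longrightarrow> \<gamma> t \<in> stiefel n p l) \<and>
      (\<forall>i j k. ((\<lambda>t. \<gamma> t i j k) has_real_derivative V i j k) (at 0))}"

definition is_orth_proj :: "nat \<Rightarrow> nat \<Rightarrow> nat \<Rightarrow> tensor set \<Rightarrow> (tensor \<Rightarrow> tensor) \<Rightarrow> bool" where
  "is_orth_proj n p l T P \<longleftrightarrow>
     (\<forall>U \<in> tensors n p l. P U \<in> T \<and> (\<forall>V \<in> T. tinner n p l (tsub U (P U)) V = 0))"

end

theory Submission
  imports Defs "Jordan_Normal_Form.Determinant"
begin

(* The tangent space at X is {V. X^T * V is skew}. Differentiating X^T * X = I along a curve
   gives one inclusion. Conversely, such a V equals W * X for a skew W, and the Cayley curve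
   t -> (I + tW) * (I - tW)^-1 * X stays in St(n,p,l) with velocity 2 W * X at 0; I - tW has a
   right inverse because <W * Z, Z> = 0 makes it norm-increasing, hence injective, so the block
   circulant matrix bcirc(I - tW) has nonzero determinant.
   With this description, X^T * P(U) = skew(X^T * U) shows that P(U) is tangent, and the residual
   X * sym(X^T * U) is orthogonal to every tangent V since <X * S, V> = <S, X^T * V> vanishes for
   symmetric S and skew X^T * V. *)

section \<open>Index arithmetic modulo l\<close>

definition diff_mod :: "nat \<Rightarrow> nat \<Rightarrow> nat \<Rightarrow> nat" where
  "diff_mod l a b = nat ((int a - int b) mod int l)"

lemma diff_mod_less: "0 < l \<Longrightarrow> diff_mod l a b < l"
  unfolding diff_mod_def by (simp add: nat_less_iff)

lemma diff_mod_diff_mod: "0 < l \<Longrightarrow> diff_mod l (diff_mod l a c) (diff_mod l b c) = diff_mod l a b"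
  unfolding diff_mod_def by (simp add: mod_diff_eq)

lemma diff_mod_0_diff_mod: "0 < l \<Longrightarrow> diff_mod l 0 (diff_mod l a b) = diff_mod l b a"
  unfolding diff_mod_def by (simp add: mod_minus_eq)

lemma diff_mod_diff_mod_cancel: "b < l \<Longrightarrow> diff_mod l a (diff_mod l a b) = b"
  unfolding diff_mod_def by (simp add: mod_diff_right_eq)

lemma diff_mod_self [simp]: "diff_mod l a a = 0"
  unfolding diff_mod_def by simp

lemma diff_mod_0_right: "a < l \<Longrightarrow> diff_mod l a 0 = a"
  unfolding diff_mod_def by simp

lemma diff_mod_eq_0_iff: "a < l \<Longrightarrow> b < l \<Longrightarrow> diff_mod l a b = 0 \<longleftrightarrow> a = b"
  by (metis diff_mod_0_right diff_mod_diff_mod_cancel diff_mod_self)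

lemma sum_diff_mod_reflect: "(\<Sum>m<l. f (diff_mod l a m)) = (\<Sum>m<l. f m)"
  by (rule sum.reindex_bij_witness[where i="diff_mod l a" and j="diff_mod l a"])
     (auto simp: diff_mod_diff_mod_cancel diff_mod_less)

lemma sum_diff_mod_shift: "(\<Sum>m<l. f (diff_mod l m a)) = (\<Sum>m<l. f m)"
proof (cases "l = 0")
  case False
  then have "(\<Sum>m<l. f (diff_mod l m a)) = (\<Sum>m<l. f (diff_mod l 0 (diff_mod l a m)))"
    by (simp add: diff_mod_0_diff_mod)
  also have "\<dots> = (\<Sum>m<l. f m)"
    using sum_diff_mod_reflect[of "\<lambda>m. f (diff_mod l 0 m)"] sum_diff_mod_reflect by simp
  finally show ?thesis .
qed simp

lemma tprod_altdef: "tprod l q A B = (\<lambda>i j k. if k < l then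
      (\<Sum>m<l. \<Sum>r<q. A i r (diff_mod l k m) * B r j m) else 0)"
  unfolding tprod_def diff_mod_def ..

lemma ttrans_altdef: "ttrans l A = (\<lambda>i j k. if k < l then A j i (diff_mod l 0 k) else 0)"
proof -
  have "(l - k) mod l = diff_mod l 0 k" if "k < l" for k
  proof -
    have "int ((l - k) mod l) = (int l + - int k) mod int l"
      using that by (simp add: zmod_int of_nat_diff)
    then show ?thesis unfolding diff_mod_def by simp
  qed
  then show ?thesis unfolding ttrans_def by (auto simp: fun_eq_iff)
qed

section \<open>Algebra of the t-product\<close>

lemma tensorsD: "A \<in> tensors n p l \<Longrightarrow> n \<le> i \<or> p \<le> j \<or> l \<le> k \<Longrightarrow> A i j k = 0"
  unfolding tensors_def by blast

lemma tensors_eqI: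
  assumes "A \<in> tensors n p l" "B \<in> tensors n p l"
    and "\<And>i j k. i < n \<Longrightarrow> j < p \<Longrightarrow> k < l \<Longrightarrow> A i j k = B i j k"
  shows "A = B"
proof (intro ext)
  fix i j k
  show "A i j k = B i j k"
    using assms tensorsD[OF assms(1), of i j k] tensorsD[OF assms(2), of i j k]
    by (cases "i < n \<and> j < p \<and> k < l") auto
qed

lemma tprod_tensors: "A \<in> tensors n q l \<Longrightarrow> B \<in> tensors q p l \<Longrightarrow> tprod l q A B \<in> tensors n p l"
  unfolding tensors_def tprod_altdef by auto

lemma ttrans_tensors: "A \<in> tensors p n l \<Longrightarrow> ttrans l A \<in> tensors n p l"
  unfolding tensors_def ttrans_altdef by auto

lemma tadd_tensors: "A \<in> tensors n p l \<Longrightarrow> B \<in> tensors n p l \<Longrightarrow> tadd A B \<in> tensors n p l"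
  unfolding tensors_def tadd_def by auto

lemma tsub_tensors: "A \<in> tensors n p l \<Longrightarrow> B \<in> tensors n p l \<Longrightarrow> tsub A B \<in> tensors n p l"
  unfolding tensors_def tsub_def by auto

lemma tscale_tensors: "A \<in> tensors n p l \<Longrightarrow> tscale c A \<in> tensors n p l"
  unfolding tensors_def tscale_def by auto

lemma tid_tensors: "tid p l \<in> tensors p p l"
  unfolding tensors_def tid_def by auto

lemmas tensors_intros = tprod_tensors ttrans_tensors tadd_tensors tsub_tensors tscale_tensors tid_tensors

lemma tprod_tadd_left: "tprod l q (tadd A B) C = tadd (tprod l q A C) (tprod l q B C)"
  by (simp add: fun_eq_iff tprod_altdef tadd_def algebra_simps sum.distrib)

lemma tprod_tadd_right: "tprod l q C (tadd A B) = tadd (tprod l q C A) (tprod l q C B)"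
  by (simp add: fun_eq_iff tprod_altdef tadd_def algebra_simps sum.distrib)

lemma tprod_tsub_left: "tprod l q (tsub A B) C = tsub (tprod l q A C) (tprod l q B C)"
  by (simp add: fun_eq_iff tprod_altdef tsub_def algebra_simps sum_subtractf)

lemma tprod_tsub_right: "tprod l q C (tsub A B) = tsub (tprod l q C A) (tprod l q C B)"
  by (simp add: fun_eq_iff tprod_altdef tsub_def algebra_simps sum_subtractf)

lemma tprod_tscale_left: "tprod l q (tscale c A) C = tscale c (tprod l q A C)"
  by (simp add: fun_eq_iff tprod_altdef tscale_def algebra_simps sum_distrib_left)

lemma tprod_tscale_right: "tprod l q C (tscale c A) = tscale c (tprod l q C A)"
  by (simp add: fun_eq_iff tprod_altdef tscale_def algebra_simps sum_distrib_left)

lemma ttrans_tadd: "ttrans l (tadd A B) = tadd (ttrans l A) (ttrans l B)"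
  by (simp add: fun_eq_iff ttrans_altdef tadd_def)

lemma ttrans_tsub: "ttrans l (tsub A B) = tsub (ttrans l A) (ttrans l B)"
  by (simp add: fun_eq_iff ttrans_altdef tsub_def)

lemma ttrans_tscale: "ttrans l (tscale c A) = tscale c (ttrans l A)"
  by (simp add: fun_eq_iff ttrans_altdef tscale_def)

lemma ttrans_ttrans: "A \<in> tensors n p l \<Longrightarrow> ttrans l (ttrans l A) = A"
  by (rule tensors_eqI[OF ttrans_tensors[OF ttrans_tensors]])
     (auto simp: ttrans_altdef diff_mod_less diff_mod_diff_mod_cancel)

lemma ttrans_tid: "ttrans l (tid p l) = tid p l"
  by (auto simp: fun_eq_iff ttrans_altdef tid_def diff_mod_eq_0_iff)

lemma tprod_tid_left: "U \<in> tensors n p l \<Longrightarrow> tprod l n (tid n l) U = U"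
proof (rule tensors_eqI[OF tprod_tensors[OF tid_tensors]])
  fix i j k assume "i < n" "j < p" "k < l"
  then have "tid n l i r (diff_mod l k m) * U r j m = (if r = i then if m = k then U i j k else 0 else 0)"
    if "m < l" for m r
    using that by (auto simp: tid_def diff_mod_eq_0_iff)
  then show "tprod l n (tid n l) U i j k = U i j k"
    using \<open>i < n\<close> \<open>k < l\<close> by (simp add: tprod_altdef)
qed

lemma tprod_tid_right: "X \<in> tensors n p l \<Longrightarrow> tprod l p X (tid p l) = X"
proof (rule tensors_eqI[OF tprod_tensors[OF _ tid_tensors]])
  fix i j k assume "i < n" "j < p" "k < l"
  then have "X i r (diff_mod l k m) * tid p l r j m = (if r = j then if m = 0 then X i j k else 0 else 0)"
    for m r
    by (auto simp: tid_def diff_mod_0_right)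
  then show "tprod l p X (tid p l) i j k = X i j k"
    using \<open>j < p\<close> \<open>k < l\<close> by (simp add: tprod_altdef)
qed

lemma sum_swap_pairs:
  "(\<Sum>x\<in>A. \<Sum>y\<in>B. \<Sum>u\<in>C. \<Sum>v\<in>D. f x y u v) = (\<Sum>u\<in>C. \<Sum>v\<in>D. \<Sum>x\<in>A. \<Sum>y\<in>B. f x y u v)"
  by (simp only: sum.swap[of _ C B] sum.swap[of _ D B] sum.swap[of _ C A] sum.swap[of _ D A])

lemma tprod_assoc: "tprod l q (tprod l r A B) C = tprod l r A (tprod l q B C)"
proof (intro ext)
  fix i j k
  have "(\<Sum>m<l. \<Sum>s<q. (\<Sum>m'<l. \<Sum>t<r. A i t (diff_mod l (diff_mod l k m) m') * B t s m') * C s j m)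
      = (\<Sum>m<l. \<Sum>s<q. \<Sum>u<l. \<Sum>t<r. A i t (diff_mod l k u) * B t s (diff_mod l u m) * C s j m)"
  proof (cases "l = 0")
    case False
    have "(\<Sum>m'<l. \<Sum>t<r. A i t (diff_mod l (diff_mod l k m) m') * B t s m')
        = (\<Sum>u<l. \<Sum>t<r. A i t (diff_mod l k u) * B t s (diff_mod l u m))" for m s
      using sum_diff_mod_shift[of "\<lambda>m'. \<Sum>t<r. A i t (diff_mod l (diff_mod l k m) m') * B t s m'" l m] False
      by (simp add: diff_mod_diff_mod)
    then show ?thesis by (simp add: sum_distrib_right)
  qed simp
  also have "\<dots> = (\<Sum>u<l. \<Sum>t<r. A i t (diff_mod l k u) * (\<Sum>m<l. \<Sum>s<q. B t s (diff_mod l u m) * C s j m))"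
    by (subst sum_swap_pairs) (simp add: sum_distrib_left mult.assoc)
  finally show "tprod l q (tprod l r A B) C i j k = tprod l r A (tprod l q B C) i j k"
    by (simp add: tprod_altdef diff_mod_less)
qed

lemma tinner_tprod_left: "tinner n p l (tprod l q A B) C = tinner q p l B (tprod l n (ttrans l A) C)"
proof -
  have "tinner n p l (tprod l q A B) C = (\<Sum>(i,j,k,m,r) \<in> {..<n} \<times> {..<p} \<times> {..<l} \<times> {..<l} \<times> {..<q}.
      A i r (diff_mod l k m) * B r j m * C i j k)"
    by (simp add: tinner_def tprod_altdef sum_distrib_right sum.cartesian_product case_prod_unfold)
  also have "\<dots> = (\<Sum>(r,j,m,k,i) \<in> {..<q} \<times> {..<p} \<times> {..<l} \<times> {..<l} \<times> {..<n}.
      A i r (diff_mod l k m) * B r j m * C i j k)"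
    by (rule sum.reindex_bij_witness[where i="\<lambda>(r,j,m,k,i). (i,j,k,m,r)"
                                           and j="\<lambda>(i,j,k,m,r). (r,j,m,k,i)"]) auto
  also have "\<dots> = tinner q p l B (tprod l n (ttrans l A) C)"
    by (simp add: tinner_def tprod_altdef ttrans_altdef diff_mod_less diff_mod_0_diff_mod sum_distrib_left
        sum.cartesian_product case_prod_unfold algebra_simps)
  finally show ?thesis .
qed

lemma ttrans_tprod: "ttrans l (tprod l q A B) = tprod l q (ttrans l B) (ttrans l A)"
proof (intro ext)
  fix i j k
  show "ttrans l (tprod l q A B) i j k = tprod l q (ttrans l B) (ttrans l A) i j k"
  proof (cases "k < l")
    case True
    then have l: "0 < l" by simp
    have "tprod l q (ttrans l B) (ttrans l A) i j k
        = (\<Sum>m<l. \<Sum>r<q. B r i (diff_mod l m k) * A j r (diff_mod l (diff_mod l 0 k) (diff_mod l m k)))"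
      using True
      by (simp add: tprod_altdef ttrans_altdef diff_mod_less diff_mod_0_diff_mod[OF l] diff_mod_diff_mod[OF l])
    also have "\<dots> = (\<Sum>m<l. \<Sum>r<q. B r i m * A j r (diff_mod l (diff_mod l 0 k) m))"
      by (rule sum_diff_mod_shift)
    also have "\<dots> = ttrans l (tprod l q A B) i j k"
      using True by (simp add: tprod_altdef ttrans_altdef diff_mod_less mult.commute)
    finally show ?thesis ..
  qed (simp add: tprod_altdef ttrans_altdef)
qed

lemma tprod_ttrans_left:
  "X \<in> tensors n p l \<Longrightarrow> tprod l n (ttrans l U) X = ttrans l (tprod l n (ttrans l X) U)"
  by (simp add: ttrans_tprod ttrans_ttrans)

lemma tinner_ttrans: "tinner p n l (ttrans l A) (ttrans l B) = tinner n p l A B"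
proof -
  have "tinner p n l (ttrans l A) (ttrans l B)
      = (\<Sum>j<p. \<Sum>i<n. \<Sum>k<l. A i j (diff_mod l 0 k) * B i j (diff_mod l 0 k))"
    by (simp add: tinner_def ttrans_altdef)
  also have "\<dots> = (\<Sum>i<n. \<Sum>j<p. \<Sum>k<l. A i j (diff_mod l 0 k) * B i j (diff_mod l 0 k))"
    by (rule sum.swap)
  also have "\<dots> = (\<Sum>i<n. \<Sum>j<p. \<Sum>k<l. A i j k * B i j k)"
    using sum_diff_mod_reflect[of "\<lambda>k. A _ _ k * B _ _ k" l 0] by simp
  finally show ?thesis unfolding tinner_def .
qed

lemma tinner_commute: "tinner n p l A B = tinner n p l B A"
  by (simp add: tinner_def mult.commute)

lemma tinner_tsub_left: "tinner n p l (tsub A B) C = tinner n p l A C - tinner n p l B C"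
  by (simp add: tinner_def tsub_def algebra_simps sum_subtractf)

lemma tinner_tsub_right: "tinner n p l C (tsub A B) = tinner n p l C A - tinner n p l C B"
  by (simp add: tinner_def tsub_def algebra_simps sum_subtractf)

lemma tinner_tscale_left: "tinner n p l (tscale c A) B = c * tinner n p l A B"
  by (simp add: tinner_def tscale_def algebra_simps sum_distrib_left)

lemma tinner_tscale_right: "tinner n p l A (tscale c B) = c * tinner n p l A B"
  by (simp add: tinner_def tscale_def algebra_simps sum_distrib_left)

lemma tinner_self_nonneg: "0 \<le> tinner n p l A A"
  by (simp add: tinner_def sum_nonneg)

lemma entry_square_le_tinner:
  assumes "A \<in> tensors n p l"
  shows "(A i j k)\<^sup>2 \<le> tinner n p l A A"
proof (cases "i < n \<and> j < p \<and> k < l")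
  case True
  have "(A i j k)\<^sup>2 \<le> (\<Sum>k'<l. A i j k' * A i j k')"
    using True unfolding power2_eq_square by (intro member_le_sum[of k _ "\<lambda>k'. A i j k' * A i j k'"]) auto
  also have "\<dots> \<le> (\<Sum>j'<p. \<Sum>k'<l. A i j' k' * A i j' k')"
    using True by (intro member_le_sum[of j _ "\<lambda>j'. \<Sum>k'<l. A i j' k' * A i j' k'"]) (auto intro: sum_nonneg)
  also have "\<dots> \<le> tinner n p l A A"
    using True unfolding tinner_def by (intro member_le_sum) (auto intro!: sum_nonneg)
  finally show ?thesis .
qed (use tensorsD[OF assms, of i j k] tinner_self_nonneg[of n p l A] in auto)

definition skew_tensor :: "nat \<Rightarrow> tensor \<Rightarrow> bool" where
  "skew_tensor l A \<longleftrightarrow> ttrans l A = tscale (-1) A"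

lemma tinner_sym_skew:
  assumes "ttrans l S = S" and "skew_tensor l K"
  shows "tinner p p l S K = 0"
proof -
  have "tinner p p l S K = tinner p p l (ttrans l S) (ttrans l K)"
    by (rule tinner_ttrans[symmetric])
  also have "\<dots> = - tinner p p l S K"
    using assms by (simp add: skew_tensor_def tinner_tscale_right)
  finally show ?thesis by simp
qed

section \<open>Right inverses via the block circulant matrix\<close>

lemma sum_lessThan_mult:
  fixes l n :: nat
  shows "(\<Sum>c<l * n. f c) = (\<Sum>m<l. \<Sum>r<n. f (m * n + r))"
proof -
  have "sum f {m * n..<m * n + n} = (\<Sum>r<n. f (m * n + r))" for m
    by (simp add: sum.atLeastLessThan_shift_0[of _ "m * n"] atLeast0LessThan)
  then show ?thesis
    using sum.nat_group[of f n l] by simp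
qed

lemma mult_add_less_mult: "(i::nat) < n \<Longrightarrow> k < l \<Longrightarrow> k * n + i < l * n"
  using mult_le_mono1[of "Suc k" l n] by simp

(* Index k * n + i addresses row i of block k. *)
definition bcirc :: "nat \<Rightarrow> nat \<Rightarrow> tensor \<Rightarrow> real mat" where
  "bcirc n l A = mat (l * n) (l * n) (\<lambda>(a, b). A (a mod n) (b mod n) (diff_mod l (a div n) (b div n)))"

lemma bcirc_carrier: "bcirc n l A \<in> carrier_mat (l * n) (l * n)"
  unfolding bcirc_def by simp

lemma tprod_eq_bcirc:
  assumes "i < n" "k < l"
  shows "tprod l n A Y i j k = (\<Sum>c<l * n. bcirc n l A $$ (k * n + i, c) * Y (c mod n) j (c div n))"
  using assms by (simp add: tprod_altdef sum_lessThan_mult bcirc_def mult_add_less_mult)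

lemma mod_div_less_mult:
  fixes c n :: nat
  assumes "c < l * n"
  shows "c mod n < n" and "c div n < l"
proof -
  show "c mod n < n" using assms by (cases "n = 0") auto
  show "c div n < l" using assms by (rule less_mult_imp_div_less)
qed

lemma det_bcirc_nonzero:
  assumes A: "A \<in> tensors n n l"
    and inj: "\<And>Z. Z \<in> tensors n 1 l \<Longrightarrow> tprod l n A Z = (\<lambda>i j k. 0) \<Longrightarrow> Z = (\<lambda>i j k. 0)"
  shows "det (bcirc n l A) \<noteq> 0"
proof
  assume "det (bcirc n l A) = 0"
  then obtain v where v: "v \<in> carrier_vec (l * n)" "v \<noteq> 0\<^sub>v (l * n)" "bcirc n l A *\<^sub>v v = 0\<^sub>v (l * n)"
    using det_0_iff_vec_prod_zero[OF bcirc_carrier] by blast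
  define Z :: tensor where "Z i j k = (if i < n \<and> j = 0 \<and> k < l then v $ (k * n + i) else 0)" for i j k
  have Z: "Z \<in> tensors n 1 l"
    by (auto simp: tensors_def Z_def)
  have "tprod l n A Z = (\<lambda>i j k. 0)"
  proof (rule tensors_eqI[OF tprod_tensors[OF A Z]])
    fix i j k :: nat assume ijk: "i < n" "j < 1" "k < l"
    have "tprod l n A Z i j k = (bcirc n l A *\<^sub>v v) $ (k * n + i)"
      using ijk v(1) bcirc_carrier[of n l A]
      by (simp add: tprod_eq_bcirc Z_def mod_div_less_mult mult_add_less_mult scalar_prod_def
          atLeast0LessThan)
    then show "tprod l n A Z i j k = 0"
      using ijk v(3) by (simp add: mult_add_less_mult)
  qed (simp add: tensors_def)
  then have "Z = (\<lambda>i j k. 0)" by (rule inj[OF Z])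
  moreover have "v $ c = Z (c mod n) 0 (c div n)" if "c < l * n" for c
    using that by (simp add: Z_def mod_div_less_mult)
  ultimately have "v $ c = 0" if "c < l * n" for c
    using that by simp
  then show False
    using v(1,2) by (auto intro: eq_vecI)
qed

lemma tprod_right_inverse_exists:
  assumes A: "A \<in> tensors n n l" and det: "det (bcirc n l A) \<noteq> 0"
  shows "\<exists>Y\<in>tensors n n l. tprod l n A Y = tid n l"
proof -
  obtain C where C: "C \<in> carrier_mat (l * n) (l * n)" "bcirc n l A * C = 1\<^sub>m (l * n)"
    using det_non_zero_imp_unit[OF bcirc_carrier det, of "()"] unfolding Units_def ring_mat_def by auto
  define Y :: tensor where "Y i j k = (if i < n \<and> j < n \<and> k < l then C $$ (k * n + i, j) else 0)" for i j k
  have Y: "Y \<in> tensors n n l"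
    by (auto simp: tensors_def Y_def)
  have "tprod l n A Y = tid n l"
  proof (rule tensors_eqI[OF tprod_tensors[OF A Y] tid_tensors])
    fix i j k assume ijk: "i < n" "j < n" "k < l"
    then have "tprod l n A Y i j k = (bcirc n l A * C) $$ (k * n + i, j)"
      using C(1) bcirc_carrier[of n l A] mult_add_less_mult[of i n k l] mult_add_less_mult[of j n 0 l]
      by (simp add: tprod_eq_bcirc Y_def mod_div_less_mult scalar_prod_def atLeast0LessThan)
    also have "\<dots> = (if k * n + i = j then 1 else 0)"
      using ijk C(2) mult_add_less_mult[of i n k l] mult_add_less_mult[of j n 0 l] by simp
    also have "\<dots> = tid n l i j k"
      using ijk by (cases k) (auto simp: tid_def)
    finally show "tprod l n A Y i j k = tid n l i j k" .
  qed
  with Y show ?thesis by blast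
qed

section \<open>The Cayley transform of a skew tensor\<close>

lemma tinner_le_id_minus_skew:
  assumes W: "skew_tensor l W" and Z: "Z \<in> tensors n q l"
  shows "tinner n q l Z Z \<le> tinner n q l (tprod l n (tsub (tid n l) (tscale t W)) Z)
                                          (tprod l n (tsub (tid n l) (tscale t W)) Z)"
proof -
  define D where "D = tprod l n W Z"
  have MZ: "tprod l n (tsub (tid n l) (tscale t W)) Z = tsub Z (tscale t D)"
    by (simp add: D_def tprod_tsub_left tprod_tscale_left tprod_tid_left[OF Z])
  have "tinner n q l D Z = tinner n q l Z (tprod l n (ttrans l W) Z)"
    unfolding D_def by (rule tinner_tprod_left)
  also have "\<dots> = - tinner n q l D Z"
    using W by (simp add: skew_tensor_def D_def tprod_tscale_left tinner_tscale_right tinner_commute)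
  finally have "tinner n q l D Z = 0" by simp
  then show ?thesis
    using mult_nonneg_nonneg[OF zero_le_square[of t] tinner_self_nonneg[of n q l D]]
    by (simp add: MZ tinner_tsub_left tinner_tsub_right tinner_tscale_left tinner_tscale_right
        tinner_commute[of n q l Z D])
qed

lemma id_minus_skew_right_inverse:
  assumes W: "W \<in> tensors n n l" "skew_tensor l W"
  shows "\<exists>Y\<in>tensors n n l. tprod l n (tsub (tid n l) (tscale t W)) Y = tid n l"
proof (rule tprod_right_inverse_exists)
  show M: "tsub (tid n l) (tscale t W) \<in> tensors n n l"
    by (intro tensors_intros W(1))
  show "det (bcirc n l (tsub (tid n l) (tscale t W))) \<noteq> 0"
  proof (rule det_bcirc_nonzero[OF M])
    fix Z assume Z: "Z \<in> tensors n 1 l" and "tprod l n (tsub (tid n l) (tscale t W)) Z = (\<lambda>i j k. 0)"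
    then have "tinner n 1 l Z Z \<le> 0"
      using tinner_le_id_minus_skew[OF W(2) Z, of t] by (simp add: tinner_def)
    then have "(Z i j k)\<^sup>2 \<le> 0" for i j k
      using entry_square_le_tinner[OF Z, of i j k] by linarith
    then show "Z = (\<lambda>i j k. 0)"
      by (simp add: fun_eq_iff)
  qed
qed

lemma cayley_orthogonal:
  assumes W: "W \<in> tensors n n l" "skew_tensor l W"
    and Y: "Y \<in> tensors n n l" "tprod l n (tsub (tid n l) (tscale t W)) Y = tid n l"
  defines "Q \<equiv> tprod l n (tadd (tid n l) (tscale t W)) Y"
  shows "tprod l n (ttrans l Q) Q = tid n l"
proof -
  define M where "M = tsub (tid n l) (tscale t W)"
  define P where "P = tadd (tid n l) (tscale t W)"
  have PT: "ttrans l P = M" and MT: "ttrans l M = P"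
    using W(2) unfolding M_def P_def ttrans_tadd ttrans_tsub ttrans_tscale ttrans_tid
    by (simp_all add: skew_tensor_def fun_eq_iff tadd_def tsub_def tscale_def)
  have comm: "tprod l n M P = tprod l n P M"
    unfolding M_def P_def tprod_tsub_left tprod_tadd_left tprod_tadd_right tprod_tsub_right
      tprod_tscale_left tprod_tscale_right tprod_tid_left[OF tid_tensors] tprod_tid_left[OF W(1)]
      tprod_tid_right[OF W(1)]
    by (simp add: fun_eq_iff tadd_def tsub_def tscale_def algebra_simps)
  have "tprod l n (ttrans l Q) Q = tprod l n (ttrans l Y) (tprod l n (tprod l n M P) Y)"
    by (simp add: Q_def P_def[symmetric] ttrans_tprod PT tprod_assoc)
  also have "\<dots> = tprod l n (ttrans l Y) (tprod l n P (tprod l n M Y))"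
    by (simp only: comm tprod_assoc)
  also have "\<dots> = tprod l n (ttrans l Y) (ttrans l M)"
    using Y(2) tprod_tid_right[of P n n l] by (simp add: M_def[symmetric] P_def tensors_intros W(1) MT)
  also have "\<dots> = tid n l"
    using Y(2) by (simp add: M_def ttrans_tid flip: ttrans_tprod)
  finally show ?thesis .
qed

lemma id_minus_skew_right_inverse_tendsto:
  assumes W: "W \<in> tensors n n l" "skew_tensor l W"
    and Y: "\<And>t. Y t \<in> tensors n n l" "\<And>t. tprod l n (tsub (tid n l) (tscale t W)) (Y t) = tid n l"
  shows "((\<lambda>t. Y t i j k) \<longlongrightarrow> tid n l i j k) (at 0)"
proof -
  have bound: "\<bar>Y t i j k - tid n l i j k\<bar> \<le> \<bar>t\<bar> * sqrt (tinner n n l W W)" for t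
  proof -
    have D: "tsub (Y t) (tid n l) \<in> tensors n n l"
      by (intro tensors_intros Y(1))
    have "tprod l n (tsub (tid n l) (tscale t W)) (tsub (Y t) (tid n l)) = tscale t W"
      unfolding tprod_tsub_right Y(2)
        tprod_tid_right[OF tsub_tensors[OF tid_tensors tscale_tensors[OF W(1)]]]
      by (simp add: fun_eq_iff tsub_def)
    then have "(Y t i j k - tid n l i j k)\<^sup>2 \<le> t\<^sup>2 * tinner n n l W W"
      using tinner_le_id_minus_skew[OF W(2) D, of t] entry_square_le_tinner[OF D, of i j k]
      by (simp add: tsub_def tinner_tscale_left tinner_tscale_right power2_eq_square)
    then show ?thesis
      using real_sqrt_le_mono by (fastforce simp: real_sqrt_mult)
  qed
  have "((\<lambda>t. Y t i j k - tid n l i j k) \<longlongrightarrow> 0) (at 0)"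
  proof (rule Lim_null_comparison)
    show "\<forall>\<^sub>F t in at 0. norm (Y t i j k - tid n l i j k) \<le> \<bar>t\<bar> * sqrt (tinner n n l W W)"
      using bound by simp
    show "((\<lambda>t. \<bar>t\<bar> * sqrt (tinner n n l W W)) \<longlongrightarrow> 0) (at 0)"
      by (intro tendsto_mult_left_zero tendsto_rabs_zero tendsto_ident_at)
  qed
  then show ?thesis
    by (simp add: LIM_zero_iff)
qed

lemma tprod_tendsto:
  assumes "\<And>i j k. ((\<lambda>t. A t i j k) \<longlongrightarrow> A0 i j k) F" and "\<And>i j k. ((\<lambda>t. B t i j k) \<longlongrightarrow> B0 i j k) F"
  shows "((\<lambda>t. tprod l q (A t) (B t) i j k) \<longlongrightarrow> tprod l q A0 B0 i j k) F"
  unfolding tprod_altdef by (auto intro!: tendsto_intros assms)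

lemma tangent_space_memI:
  assumes "\<And>t. \<gamma> t \<in> stiefel n p l"
    and "\<And>t i j k. \<gamma> t i j k = X i j k + t * G t i j k"
    and "\<And>i j k. isCont (\<lambda>t. G t i j k) 0"
  shows "G 0 \<in> tangent_space n p l X"
proof -
  have "\<gamma> 0 = X"
    using assms(2) by (simp add: fun_eq_iff)
  moreover have "((\<lambda>t. \<gamma> t i j k) has_real_derivative G 0 i j k) (at 0)" for i j k
    unfolding CARAT_DERIV using assms(2,3) by (intro exI[of _ "\<lambda>t. G t i j k"]) simp
  ultimately show ?thesis
    unfolding tangent_space_def using assms(1) by (intro CollectI exI[of _ \<gamma>] exI[of _ 1]) auto
qed

lemma cayley_curve_tangent:
  assumes X: "X \<in> stiefel n p l" and W: "W \<in> tensors n n l" "skew_tensor l W"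
  shows "tscale 2 (tprod l n W X) \<in> tangent_space n p l X"
proof -
  have Xt: "X \<in> tensors n p l" and XX: "tprod l n (ttrans l X) X = tid p l"
    using X by (auto simp: stiefel_def)
  obtain Y where Y: "\<And>t. Y t \<in> tensors n n l" "\<And>t. tprod l n (tsub (tid n l) (tscale t W)) (Y t) = tid n l"
    using id_minus_skew_right_inverse[OF W] by metis
  define Q where "Q t = tprod l n (tadd (tid n l) (tscale t W)) (Y t)" for t
  define G where "G t = tscale 2 (tprod l n (tprod l n W (Y t)) X)" for t
  have "tprod l n (ttrans l (tprod l n (Q t) X)) (tprod l n (Q t) X)
      = tprod l n (ttrans l X) (tprod l n (tprod l n (ttrans l (Q t)) (Q t)) X)" for t
    by (simp only: ttrans_tprod tprod_assoc)
  then have curve: "tprod l n (Q t) X \<in> stiefel n p l" for t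
    using cayley_orthogonal[OF W Y(1) Y(2), of t] XX
    unfolding stiefel_def Q_def by (auto simp: tprod_tid_left[OF Xt] intro!: tensors_intros W Y(1) Xt)
  have Yeq: "Y t a b c = tid n l a b c + t * tprod l n W (Y t) a b c" for t a b c
  proof -
    have "tsub (Y t) (tscale t (tprod l n W (Y t))) = tid n l"
      using Y(2)[of t] unfolding tprod_tsub_left tprod_tscale_left tprod_tid_left[OF Y(1)] .
    then show ?thesis
      by (simp add: fun_eq_iff tsub_def tscale_def diff_eq_eq)
  qed
  have Qeq: "Q t = tadd (tid n l) (tscale (2 * t) (tprod l n W (Y t)))" for t
    unfolding Q_def tprod_tadd_left tprod_tscale_left tprod_tid_left[OF Y(1)]
    by (simp add: fun_eq_iff tadd_def tscale_def Yeq)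
  have expansion: "tprod l n (Q t) X i j k = X i j k + t * G t i j k" for t i j k
    unfolding Qeq G_def tprod_tadd_left tprod_tscale_left tprod_tid_left[OF Xt]
    by (simp add: tadd_def tscale_def)
  have Y0: "Y 0 = tid n l"
    using Y(2)[of 0] tprod_tid_left[OF Y(1)[of 0]] by (simp add: tsub_def tscale_def)
  have "isCont (\<lambda>t. G t i j k) 0" for i j k
    unfolding isCont_def G_def tscale_def Y0
    by (intro tendsto_mult_left tprod_tendsto tendsto_const id_minus_skew_right_inverse_tendsto[OF W Y])
  with curve expansion have "G 0 \<in> tangent_space n p l X"
    by (rule tangent_space_memI)
  then show ?thesis
    by (simp add: G_def Y0 tprod_tid_right[OF W(1)])
qed

section \<open>The tangent space and the projection onto it\<close>

lemma tprod_has_real_derivative: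
  assumes "\<And>i j k. ((\<lambda>t. A t i j k) has_real_derivative A' i j k) (at x)"
    and "\<And>i j k. ((\<lambda>t. B t i j k) has_real_derivative B' i j k) (at x)"
  shows "((\<lambda>t. tprod l q (A t) (B t) i j k) has_real_derivative
           tadd (tprod l q A' (B x)) (tprod l q (A x) B') i j k) (at x)"
  unfolding tprod_altdef tadd_def
  by (auto intro!: derivative_eq_intros assms simp: sum.distrib algebra_simps)

lemma ttrans_has_real_derivative:
  assumes "\<And>i j k. ((\<lambda>t. A t i j k) has_real_derivative A' i j k) (at x)"
  shows "((\<lambda>t. ttrans l (A t) i j k) has_real_derivative ttrans l A' i j k) (at x)"
  unfolding ttrans_altdef by (auto intro!: derivative_eq_intros assms)

lemma tangent_space_skew:
  assumes X: "X \<in> stiefel n p l" and V: "V \<in> tangent_space n p l X"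
  shows "V \<in> tensors n p l" and "skew_tensor l (tprod l n (ttrans l X) V)"
proof -
  have Xt: "X \<in> tensors n p l"
    using X by (simp add: stiefel_def)
  obtain \<gamma> \<epsilon> where "0 < \<epsilon>" and "\<gamma> 0 = X"
    and curve: "\<And>t. \<bar>t\<bar> < \<epsilon> \<Longrightarrow> \<gamma> t \<in> stiefel n p l"
    and deriv: "\<And>i j k. ((\<lambda>t. \<gamma> t i j k) has_real_derivative V i j k) (at 0)"
    using V unfolding tangent_space_def by blast
  have locally_const: "D = 0"
    if "(f has_real_derivative D) (at 0)" and "\<And>t. \<bar>t\<bar> < \<epsilon> \<Longrightarrow> f t = c" for f D c
    using DERIV_local_const[OF that(1) \<open>0 < \<epsilon>\<close>] that(2) \<open>0 < \<epsilon>\<close> by simp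
  show "V \<in> tensors n p l"
    unfolding tensors_def
  proof (intro CollectI allI impI)
    fix i j k assume "n \<le> i \<or> p \<le> j \<or> l \<le> k"
    then have "\<gamma> t i j k = 0" if "\<bar>t\<bar> < \<epsilon>" for t
      using curve[OF that] by (auto simp: stiefel_def dest: tensorsD)
    then show "V i j k = 0"
      using locally_const[OF deriv] by blast
  qed
  have "tadd (tprod l n (ttrans l V) X) (tprod l n (ttrans l X) V) i j k = 0" for i j k
  proof (rule locally_const)
    show "((\<lambda>t. tprod l n (ttrans l (\<gamma> t)) (\<gamma> t) i j k) has_real_derivative
        tadd (tprod l n (ttrans l V) X) (tprod l n (ttrans l X) V) i j k) (at 0)"
      using tprod_has_real_derivative[OF ttrans_has_real_derivative[OF deriv] deriv] \<open>\<gamma> 0 = X\<close> by simp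
    show "tprod l n (ttrans l (\<gamma> t)) (\<gamma> t) i j k = tid p l i j k" if "\<bar>t\<bar> < \<epsilon>" for t
      using curve[OF that] by (simp add: stiefel_def)
  qed
  then show "skew_tensor l (tprod l n (ttrans l X) V)"
    unfolding skew_tensor_def tprod_ttrans_left[OF Xt, symmetric]
    by (simp add: fun_eq_iff tadd_def tscale_def add_eq_0_iff)
qed

lemma exists_skew_generator:
  assumes X: "X \<in> stiefel n p l" and V: "V \<in> tensors n p l"
    and K: "skew_tensor l (tprod l n (ttrans l X) V)"
  shows "\<exists>W\<in>tensors n n l. skew_tensor l W \<and> tprod l n W X = V"
proof -
  have Xt: "X \<in> tensors n p l" and XX: "tprod l n (ttrans l X) X = tid p l"
    using X by (auto simp: stiefel_def)
  define K where "K = tprod l n (ttrans l X) V"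
  have KT: "ttrans l K = tscale (-1) K"
    using K by (simp add: K_def skew_tensor_def)
  have Kt: "K \<in> tensors p p l"
    unfolding K_def by (intro tensors_intros Xt V)
  have VX: "tprod l n (ttrans l V) X = tscale (-1) K"
    using KT by (simp add: K_def tprod_ttrans_left[OF Xt])
  define W where "W = tsub (tsub (tprod l p V (ttrans l X)) (tprod l p X (ttrans l V)))
                            (tprod l p (tprod l p X K) (ttrans l X))"
  have "W \<in> tensors n n l"
    unfolding W_def K_def by (intro tensors_intros Xt V)
  moreover have "skew_tensor l W"
    unfolding skew_tensor_def W_def ttrans_tsub ttrans_tprod ttrans_ttrans[OF Xt] ttrans_ttrans[OF V] KT
      tprod_tscale_left tprod_tscale_right tprod_assoc
    by (simp add: fun_eq_iff tsub_def tscale_def)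
  moreover have "tprod l n W X = V"
    unfolding W_def tprod_tsub_left tprod_assoc XX VX tprod_tid_right[OF V] tprod_tid_right[OF Kt]
      tprod_tscale_right
    by (simp add: fun_eq_iff tsub_def tscale_def)
  ultimately show ?thesis by blast
qed

lemma tangent_space_eq:
  assumes "X \<in> stiefel n p l"
  shows "tangent_space n p l X = {V \<in> tensors n p l. skew_tensor l (tprod l n (ttrans l X) V)}"
proof (intro subset_antisym subsetI)
  fix V assume "V \<in> tangent_space n p l X"
  with tangent_space_skew[OF assms]
  show "V \<in> {V \<in> tensors n p l. skew_tensor l (tprod l n (ttrans l X) V)}"
    by blast
next
  fix V assume "V \<in> {V \<in> tensors n p l. skew_tensor l (tprod l n (ttrans l X) V)}"
  then obtain W where W: "W \<in> tensors n n l" "skew_tensor l W" and "tprod l n W X = V"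
    using exists_skew_generator[OF assms] by blast
  have "skew_tensor l (tscale (1/2) W)"
    using W(2) unfolding skew_tensor_def ttrans_tscale by (simp add: fun_eq_iff tscale_def)
  then have "tscale 2 (tprod l n (tscale (1/2) W) X) \<in> tangent_space n p l X"
    by (intro cayley_curve_tangent[OF assms] tensors_intros W(1))
  moreover have "tscale 2 (tprod l n (tscale (1/2) W) X) = V"
    using \<open>tprod l n W X = V\<close> unfolding tprod_tscale_left by (simp add: fun_eq_iff tscale_def)
  ultimately show "V \<in> tangent_space n p l X"
    by simp
qed

lemma ttrans_tsym: "A \<in> tensors p p l \<Longrightarrow> ttrans l (tsym l A) = tsym l A"
  unfolding tsym_def ttrans_tscale ttrans_tadd
  by (simp add: ttrans_ttrans fun_eq_iff tadd_def tscale_def)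

lemma skew_tensor_tskew: "A \<in> tensors p p l \<Longrightarrow> skew_tensor l (tskew l A)"
  unfolding skew_tensor_def tskew_def ttrans_tscale ttrans_tsub
  by (simp add: ttrans_ttrans fun_eq_iff tsub_def tscale_def)

lemma tsym_tensors: "A \<in> tensors p p l \<Longrightarrow> tsym l A \<in> tensors p p l"
  unfolding tsym_def by (intro tensors_intros)

lemma is_orth_proj_tangent_space:
  assumes X: "X \<in> stiefel n p l"
  shows "is_orth_proj n p l (tangent_space n p l X)
           (\<lambda>U. tsub U (tprod l p X (tsym l (tprod l n (ttrans l X) U))))"
  unfolding is_orth_proj_def tangent_space_eq[OF X]
proof (intro ballI conjI)
  have Xt: "X \<in> tensors n p l" and XX: "tprod l n (ttrans l X) X = tid p l"
    using X by (auto simp: stiefel_def)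
  fix U assume U: "U \<in> tensors n p l"
  define G where "G = tprod l n (ttrans l X) U"
  have G: "G \<in> tensors p p l"
    unfolding G_def by (intro tensors_intros Xt U)
  have "tprod l n (ttrans l X) (tsub U (tprod l p X (tsym l G))) = tskew l G"
    unfolding tprod_tsub_right G_def[symmetric] tprod_assoc[symmetric] XX
      tprod_tid_left[OF tsym_tensors[OF G]]
    by (simp add: tsym_def tskew_def fun_eq_iff tsub_def tadd_def tscale_def field_simps)
  then show "tsub U (tprod l p X (tsym l G))
      \<in> {V \<in> tensors n p l. skew_tensor l (tprod l n (ttrans l X) V)}"
    using skew_tensor_tskew[OF G] by (auto intro!: tensors_intros U Xt G simp: tsym_def)
  fix V assume "V \<in> {V \<in> tensors n p l. skew_tensor l (tprod l n (ttrans l X) V)}"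
  then have "tinner p p l (tsym l G) (tprod l n (ttrans l X) V) = 0"
    using ttrans_tsym[OF G] by (auto intro: tinner_sym_skew)
  moreover have "tsub U (tsub U (tprod l p X (tsym l G))) = tprod l p X (tsym l G)"
    by (simp add: fun_eq_iff tsub_def)
  ultimately show "tinner n p l (tsub U (tsub U (tprod l p X (tsym l G)))) V = 0"
    by (simp add: tinner_tprod_left)
qed

theorem mainTheorem3:
  fixes n p l :: nat and X :: tensor
  assumes "p \<le> n" and "X \<in> stiefel n p l"
  shows "is_orth_proj n p l (tangent_space n p l X)
           (\<lambda>U. tsub U (tscale (1/2) (tprod l p X
                  (tadd (tprod l n (ttrans l X) U) (tprod l n (ttrans l U) X)))))
    \<and> (\<forall>U \<in> tensors n p l.
         tsub U (tscale (1/2) (tprod l p X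
                  (tadd (tprod l n (ttrans l X) U) (tprod l n (ttrans l U) X))))
           = tsub U (tprod l p X (tsym l (tprod l n (ttrans l X) U)))
       \<and> tsub U (tprod l p X (tsym l (tprod l n (ttrans l X) U)))
           = tadd (tprod l n (tsub (tid n l) (tprod l p X (ttrans l X))) U)
                  (tprod l p X (tskew l (tprod l n (ttrans l X) U))))"
proof -
  have Xt: "X \<in> tensors n p l"
    using assms(2) by (simp add: stiefel_def)
  have sym_form: "tscale (1/2) (tprod l p X (tadd (tprod l n (ttrans l X) U) (tprod l n (ttrans l U) X)))
      = tprod l p X (tsym l (tprod l n (ttrans l X) U))" for U
    by (simp add: tsym_def tprod_tscale_right tprod_ttrans_left[OF Xt])
  have skew_form: "tsub U (tprod l p X (tsym l (tprod l n (ttrans l X) U)))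
      = tadd (tprod l n (tsub (tid n l) (tprod l p X (ttrans l X))) U)
             (tprod l p X (tskew l (tprod l n (ttrans l X) U)))"
    if "U \<in> tensors n p l" for U
    unfolding tsym_def tskew_def tprod_tsub_left tprod_tid_left[OF that] tprod_assoc tprod_tscale_right
      tprod_tadd_right tprod_tsub_right
    by (simp add: fun_eq_iff tsub_def tadd_def tscale_def algebra_simps)
  show ?thesis
    using is_orth_proj_tangent_space[OF assms(2)] sym_form skew_form by simp
qed

end
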